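(* For every $\varepsilon\in(0,1/2)$ there exist $\delta=\delta_\varepsilon>0$ and an integer $N_{\varepsilon,\delta}$ such that for every integer $N\ge N_{\varepsilon,\delta}$ there is a set $\mathcal E(N)\subset\{0,1\}^N$ with $\#\mathcal E(N)\le \varepsilon\, 2^N$ such that for every $\mathfrak u\in\{0,1\}^N\setminus\mathcal E(N)$ and every integer $0\le k\le\lfloor\delta N\rfloor$ one has $R_{\mathfrak w}(k)\in[1/2-\varepsilon,1/2+\varepsilon]$ and $R_{\mathfrak e}(k)\in[1/2-\varepsilon,1/2+\varepsilon]$, where these proportions are computed in the P-G triangle of side $N$ generated by $\mathfrak u$.
   Context: For $\mathfrak u=(a_0,\dots,a_{N-1})\in\{0,1\}^N$, the P-G triangle of side $N$ generated by $\mathfrak u$ consists of the numbers $d_i^{(j)}\in\{0,1\}$, $j\ge0$, $0\le i\le N-1-j$, with $d_i^{(0)}=a_i$ and $d_i^{(j+1)}=|d_{i+1}^{(j)}-d_i^{(j)}|$. For $0\le k\le N-1$, the western ray $\mathfrak w_k$ is the sequence $(d_k^{(j)})_{0\le j\le N-1-k}$ and the eastern ray $\mathfrak e_k$ is the sequence $(d_{N-1-k-j}^{(j)})_{0\le j\le N-1-k}$, each of length $N-k$. $R_{\mathfrak w}(k)=\frac{1}{N-k}\#\{0\le j\le N-1-k: d_k^{(j)}=1\}$ and $R_{\mathfrak e}(k)=\frac{1}{N-k}\#\{0\le j\le N-1-k: d_{N-1-k-j}^{(j)}=1\}$ are the proportions of ones on $\mathfrak w_k$ and $\mathfrak e_k$.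 *)

theory Defs
  imports Complex_Main
begin

definition binwords :: "nat \<Rightarrow> nat list set" where
  "binwords N = {u. length u = N \<and> set u \<subseteq> {0,1}}"

text \<open>Entries of the P-G triangle generated by u: pg u j i = d_i^{(j)}
  (meaningful for j \<ge> 0, 0 \<le> i \<le> N-1-j where N = length u).\<close>
fun pg :: "nat list \<Rightarrow> nat \<Rightarrow> nat \<Rightarrow> nat" where
  "pg u 0 i = u ! i"
| "pg u (Suc j) i = (if pg u j (Suc i) \<ge> pg u j i then pg u j (Suc i) - pg u j i
                     else pg u j i - pg u j (Suc i))"

text \<open>Proportion of ones on the western ray w_k, with N = length u.\<close>
definition R_west :: "nat list \<Rightarrow> nat \<Rightarrow> real" where
  "R_west u k = (let N = length u in
     real (card {j. j \<le> N - 1 - k \<and> pg u j k = 1}) / real (N - k))"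

text \<open>Proportion of ones on the eastern ray e_k, with N = length u.\<close>
definition R_east :: "nat list \<Rightarrow> nat \<Rightarrow> real" where
  "R_east u k = (let N = length u in
     real (card {j. j \<le> N - 1 - k \<and> pg u j (N - 1 - k - j) = 1}) / real (N - k))"

end

theory Submission
  imports Defs
begin

text \<open>The first column of a P-G triangle (its western ray \<open>w\<^sub>0\<close>) determines the generating word:
  a binary word and its row of absolute differences share the first letter, and the letter
  following any given one is recovered from their difference. Hence \<open>u \<mapsto> w\<^sub>0\<close> is a bijection of
  \<open>{0,1}\<^sup>m\<close>, and the western ray \<open>w\<^sub>k\<close> is the ray \<open>w\<^sub>0\<close> of the triangle generated by the last \<open>N - k\<close>
  letters; reversing the word exchanges eastern and western rays. So for each \<open>k\<close> the proportion
  of ones on \<open>w\<^sub>k\<close> or \<open>e\<^sub>k\<close> is distributed like that of a uniformly random word of length \<open>N - k\<close>, and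
  Chebyshev's inequality bounds the number of exceptions by \<open>2\<^sup>N / (2 \<epsilon>\<^sup>2 (N - k))\<close>. Summing over
  \<open>k \<le> \<epsilon>\<^sup>3 N / 2\<close> gives at most \<open>\<epsilon> 2\<^sup>N\<close> exceptional words once \<open>\<epsilon>\<^sup>3 N \<ge> 2\<close>.\<close>

definition absdiff :: "nat \<Rightarrow> nat \<Rightarrow> nat" where
  "absdiff x y = (if y \<ge> x then y - x else x - y)"

lemma absdiff_commute: "absdiff x y = absdiff y x"
  by (simp add: absdiff_def)

lemma pg_Suc_absdiff: "pg u (Suc j) i = absdiff (pg u j i) (pg u j (Suc i))"
  by (simp add: absdiff_def)

fun next_row :: "nat list \<Rightarrow> nat list" where
  "next_row (x # y # zs) = absdiff x y # next_row (y # zs)"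
| "next_row _ = []"

lemma length_next_row [simp]: "length (next_row v) = length v - 1"
  by (induction v rule: next_row.induct) auto

lemma nth_next_row: "i < length v - 1 \<Longrightarrow> next_row v ! i = absdiff (v ! i) (v ! Suc i)"
  by (induction v arbitrary: i rule: next_row.induct) (auto simp: nth_Cons split: nat.splits)

lemma length_funpow_next_row [simp]: "length ((next_row ^^ j) u) = length u - j"
  by (induction j) auto

lemma pg_eq_nth_funpow_next_row: "i + j < length u \<Longrightarrow> pg u j i = (next_row ^^ j) u ! i"
proof (induction j arbitrary: i)
  case (Suc j)
  then show ?case by (simp add: pg_Suc_absdiff nth_next_row del: pg.simps)
qed simp

lemma next_row_Cons_inj:
  assumes "set (x # xs) \<subseteq> {0,1}" "set (x # ys) \<subseteq> {0,1}" "length xs = length ys"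
    and "next_row (x # xs) = next_row (x # ys)"
  shows "xs = ys"
  using assms
proof (induction xs arbitrary: x ys)
  case (Cons a as)
  then obtain b bs where ys: "ys = b # bs" by (cases ys) auto
  have "absdiff x a = absdiff x b" and tail: "next_row (a # as) = next_row (b # bs)"
    using Cons.prems(4) ys by simp_all
  moreover have "x \<in> {0,1}" "a \<in> {0,1}" "b \<in> {0,1}"
    using Cons.prems(1,2) ys by auto
  ultimately have "a = b" by (auto simp: absdiff_def)
  moreover have "as = bs"
    using Cons.prems ys tail \<open>a = b\<close> by (intro Cons.IH[of a bs]) simp_all
  ultimately show ?case using ys by simp
qed simp

definition west_ray :: "nat list \<Rightarrow> nat list" where
  "west_ray v = map (\<lambda>j. pg v j 0) [0..<length v]"

lemma length_west_ray [simp]: "length (west_ray v) = length v"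
  by (simp add: west_ray_def)

lemma west_ray_Nil [simp]: "west_ray [] = []"
  by (simp add: west_ray_def)

lemma west_ray_Cons: "west_ray (x # xs) = x # west_ray (next_row (x # xs))"
proof (rule nth_equalityI)
  fix j assume "j < length (west_ray (x # xs))"
  then have j: "j < Suc (length xs)" by simp
  show "west_ray (x # xs) ! j = (x # west_ray (next_row (x # xs))) ! j"
  proof (cases j)
    case (Suc j')
    have "pg (x # xs) (Suc j') 0 = (next_row ^^ Suc j') (x # xs) ! 0"
      using j Suc by (intro pg_eq_nth_funpow_next_row) simp
    also have "\<dots> = (next_row ^^ j') (next_row (x # xs)) ! 0"
      by (simp only: funpow_Suc_right comp_def)
    also have "\<dots> = pg (next_row (x # xs)) j' 0"
      using j Suc by (simp add: pg_eq_nth_funpow_next_row)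
    finally show ?thesis using j Suc by (simp add: west_ray_def del: upt_Suc)
  qed (simp add: west_ray_def del: upt_Suc)
qed simp

lemma pg_drop: "k \<le> length u \<Longrightarrow> pg (drop k u) j i = pg u j (k + i)"
  by (induction j arbitrary: i) (simp_all only: pg_Suc_absdiff add_Suc_right, simp)

lemma pg_rev: "i + j < length w \<Longrightarrow> pg (rev w) j i = pg w j (length w - 1 - j - i)"
proof (induction j arbitrary: i)
  case (Suc j)
  define p where "p = length w - 1 - Suc j - i"
  have "Suc p = length w - 1 - j - i" and "length w - 1 - j - Suc i = p"
    using Suc.prems by (simp_all add: p_def)
  then have "pg (rev w) (Suc j) i = absdiff (pg w j (Suc p)) (pg w j p)"
    using Suc by (simp add: pg_Suc_absdiff del: pg.simps)
  also have "\<dots> = pg w (Suc j) p"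
    by (simp add: pg_Suc_absdiff absdiff_commute del: pg.simps)
  finally show ?case by (simp add: p_def)
qed (simp add: rev_nth)

definition freq_ones :: "nat list \<Rightarrow> real" where
  "freq_ones v = real (count_list v 1) / real (length v)"

lemma R_west_0: "R_west v 0 = freq_ones (west_ray v)"
proof (cases "v = []")
  case False
  have "{j. j \<le> length v - 1 \<and> pg v j 0 = 1} = {j. j < length v \<and> west_ray v ! j = 1}"
    using False by (cases v) (auto simp: west_ray_def less_Suc_eq_le simp del: upt_Suc)
  then show ?thesis
    by (simp add: R_west_def Let_def freq_ones_def count_list_eq_length_filter length_filter_conv_card eq_commute)
qed (simp add: R_west_def freq_ones_def)

lemma R_west_drop: "k \<le> length u \<Longrightarrow> R_west u k = R_west (drop k u) 0"
  by (simp add: R_west_def Let_def pg_drop diff_commute)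

lemma R_east_eq_R_west_rev: "R_east u k = R_west (rev u) k"
proof (cases "k < length u")
  case True
  then have "{j. j \<le> length u - 1 - k \<and> pg u j (length u - 1 - k - j) = 1}
      = {j. j \<le> length u - 1 - k \<and> pg (rev u) j k = 1}"
    by (auto simp: pg_rev diff_commute add.commute)
  then show ?thesis by (simp add: R_east_def R_west_def)
qed (simp add: R_east_def R_west_def)

lemma next_row_binwords: "v \<in> binwords (Suc n) \<Longrightarrow> next_row v \<in> binwords n"
proof -
  have "set v \<subseteq> {0,1} \<Longrightarrow> set (next_row v) \<subseteq> {0,1}" for v :: "nat list"
    by (induction v rule: next_row.induct) (auto simp: absdiff_def)
  then show "v \<in> binwords (Suc n) \<Longrightarrow> next_row v \<in> binwords n"
    by (simp add: binwords_def)
qed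

lemma finite_binwords: "finite (binwords n)"
  using finite_lists_length_eq[of "{0::nat,1}" n] by (simp add: binwords_def conj_commute)

lemma card_binwords: "card (binwords n) = 2 ^ n"
  using card_lists_length_eq[of "{0::nat,1}" n] by (simp add: binwords_def conj_commute numeral_2_eq_2)

lemma west_ray_binwords: "v \<in> binwords n \<Longrightarrow> west_ray v \<in> binwords n"
proof (induction n arbitrary: v)
  case (Suc n)
  then obtain x xs where v: "v = x # xs" by (cases v) (auto simp: binwords_def)
  have "next_row v \<in> binwords n"
    using Suc.prems by (rule next_row_binwords)
  then have "west_ray (next_row v) \<in> binwords n"
    by (rule Suc.IH)
  then show ?case
    using Suc.prems v by (simp add: west_ray_Cons binwords_def)
qed (simp add: binwords_def)

lemma inj_on_west_ray: "inj_on west_ray (binwords n)"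
proof (induction n)
  case (Suc n)
  show ?case
  proof (rule inj_onI)
    fix v w assume v: "v \<in> binwords (Suc n)" and w: "w \<in> binwords (Suc n)"
      and eq: "west_ray v = west_ray w"
    obtain x xs where vx: "v = x # xs" using v by (cases v) (auto simp: binwords_def)
    obtain y ys where wy: "w = y # ys" using w by (cases w) (auto simp: binwords_def)
    have "x = y \<and> west_ray (next_row v) = west_ray (next_row w)"
      using eq unfolding vx wy west_ray_Cons list.inject .
    then have xy: "x = y" and tail: "west_ray (next_row v) = west_ray (next_row w)" by simp_all
    from tail have "next_row v = next_row w"
      by (rule inj_onD[OF Suc.IH _ next_row_binwords[OF v] next_row_binwords[OF w]])
    then have rows: "next_row (x # xs) = next_row (x # ys)"
      unfolding vx wy xy .
    have "xs = ys"
    proof (rule next_row_Cons_inj[OF _ _ _ rows])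
      show "set (x # xs) \<subseteq> {0,1}" using v unfolding vx binwords_def by blast
      show "set (x # ys) \<subseteq> {0,1}" using w unfolding wy xy binwords_def by blast
      show "length xs = length ys" using v w unfolding vx wy binwords_def by simp
    qed
    then show "v = w" using vx wy xy by simp
  qed
qed (simp add: binwords_def inj_on_def)

lemma bij_betw_west_ray: "bij_betw west_ray (binwords n) (binwords n)"
  using endo_inj_surj[OF finite_binwords _ inj_on_west_ray] west_ray_binwords
  by (blast intro: bij_betw_imageI inj_on_west_ray)

lemma bij_betw_rev_binwords: "bij_betw rev (binwords n) (binwords n)"
proof (rule bij_betw_imageI)
  show "inj_on rev (binwords n)" by (simp add: inj_on_def)
  then show "rev ` binwords n = binwords n"
    by (rule endo_inj_surj[OF finite_binwords, rotated]) (auto simp: binwords_def)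
qed

lemma card_Collect_bij_betw:
  assumes "bij_betw f A B"
  shows "card {x \<in> A. P (f x)} = card {y \<in> B. P y}"
proof (rule bij_betw_same_card[of f])
  show "bij_betw f {x \<in> A. P (f x)} {y \<in> B. P y}"
    using assms by (auto simp: bij_betw_def inj_on_def)
qed

lemma card_binwords_drop:
  "card {u \<in> binwords (a + b). P (drop a u)} = 2 ^ a * card {v \<in> binwords b. P v}"
proof -
  let ?app = "\<lambda>(x, y). x @ y :: nat list"
  have "{u \<in> binwords (a + b). P (drop a u)} = ?app ` (binwords a \<times> {v \<in> binwords b. P v})"
  proof (intro set_eqI iffI)
    fix u assume u: "u \<in> {u \<in> binwords (a + b). P (drop a u)}"
    then have "(take a u, drop a u) \<in> binwords a \<times> {v \<in> binwords b. P v}"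
      by (auto simp: binwords_def dest: in_set_takeD in_set_dropD)
    then show "u \<in> ?app ` (binwords a \<times> {v \<in> binwords b. P v})"
      by (metis (no_types, lifting) append_take_drop_id case_prod_conv image_eqI)
  qed (auto simp: binwords_def)
  moreover have "inj_on ?app (binwords a \<times> {v \<in> binwords b. P v})"
    by (auto simp: inj_on_def binwords_def)
  ultimately show ?thesis
    by (simp add: card_image card_cartesian_product card_binwords)
qed

lemma sum_binwords_Suc:
  "(\<Sum>v\<in>binwords (Suc m). f v) = (\<Sum>v\<in>binwords m. f (0 # v)) + (\<Sum>v\<in>binwords m. f (1 # v))"
proof -
  have split: "binwords (Suc m) = Cons 0 ` binwords m \<union> Cons 1 ` binwords m"
    by (auto simp: binwords_def image_iff length_Suc_conv)
  have "(\<Sum>v\<in>binwords (Suc m). f v) = (\<Sum>v\<in>Cons 0 ` binwords m. f v) + (\<Sum>v\<in>Cons 1 ` binwords m. f v)"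
    unfolding split by (rule sum.union_disjoint) (auto simp: finite_binwords)
  then show ?thesis
    by (simp add: sum.reindex)
qed

lemma sum_binwords_count_deviation_square:
  "(\<Sum>v\<in>binwords m. (real (count_list v 1) - real m / 2)^2) = real m * 2 ^ m / 4"
proof (induction m)
  case (Suc m)
  have "(\<Sum>v\<in>binwords (Suc m). (real (count_list v 1) - real (Suc m) / 2)^2)
      = (\<Sum>v\<in>binwords m. 2 * (real (count_list v 1) - real m / 2)^2 + 1/2)"
    by (simp add: sum_binwords_Suc sum.distrib[symmetric] power2_eq_square algebra_simps)
  also have "\<dots> = real (Suc m) * 2 ^ Suc m / 4"
    using Suc.IH by (simp add: sum.distrib sum_distrib_left[symmetric] card_binwords algebra_simps)
  finally show ?case .
qed (simp add: binwords_def)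

lemma card_freq_ones_deviation:
  assumes "0 < m" "0 < e"
  shows "real (card {v \<in> binwords m. freq_ones v \<notin> {1/2 - e .. 1/2 + e}}) \<le> 2 ^ m / (4 * e^2 * real m)"
proof -
  let ?B = "{v \<in> binwords m. freq_ones v \<notin> {1/2 - e .. 1/2 + e}}"
  let ?dev = "\<lambda>v. real (count_list v 1) - real m / 2"
  have "(e * real m)^2 \<le> (?dev v)^2" if "v \<in> ?B" for v
  proof -
    have "e * real m < \<bar>?dev v\<bar>"
      using that assms by (auto simp: binwords_def freq_ones_def field_simps)
    then have "(e * real m)^2 \<le> \<bar>?dev v\<bar>^2"
      using assms by (intro power_mono) auto
    then show ?thesis by simp
  qed
  then have "real (card ?B) * (e * real m)^2 \<le> (\<Sum>v\<in>?B. (?dev v)^2)"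
    using sum_mono[of ?B "\<lambda>_. (e * real m)^2"] by simp
  also have "\<dots> \<le> (\<Sum>v\<in>binwords m. (?dev v)^2)"
    by (rule sum_mono2) (auto simp: finite_binwords)
  also have "\<dots> = real m * 2 ^ m / 4"
    by (rule sum_binwords_count_deviation_square)
  finally show ?thesis
    using assms by (simp add: field_simps power2_eq_square)
qed

lemma card_R_west_deviation:
  assumes "k < N" "0 < e"
  shows "real (card {u \<in> binwords N. R_west u k \<notin> {1/2 - e .. 1/2 + e}}) \<le> 2 ^ N / (4 * e^2 * real (N - k))"
proof -
  define m where "m = N - k"
  let ?I = "{1/2 - e .. 1/2 + e}"
  have N: "N = k + m" and "0 < m" using assms by (auto simp: m_def)
  have "R_west u k = freq_ones (west_ray (drop k u))" if "u \<in> binwords N" for u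
  proof -
    have "k \<le> length u" using that assms by (simp add: binwords_def)
    then show ?thesis by (simp only: R_west_drop R_west_0)
  qed
  then have "{u \<in> binwords N. R_west u k \<notin> ?I} = {u \<in> binwords N. freq_ones (west_ray (drop k u)) \<notin> ?I}"
    by (intro Collect_cong) auto
  also have "card \<dots> = 2 ^ k * card {v \<in> binwords m. freq_ones (west_ray v) \<notin> ?I}"
    unfolding N by (rule card_binwords_drop)
  also have "card {v \<in> binwords m. freq_ones (west_ray v) \<notin> ?I} = card {v \<in> binwords m. freq_ones v \<notin> ?I}"
    by (rule card_Collect_bij_betw[OF bij_betw_west_ray, where P = "\<lambda>v. freq_ones v \<notin> ?I"])
  finally have "real (card {u \<in> binwords N. R_west u k \<notin> ?I}) = 2 ^ k * real (card {v \<in> binwords m. freq_ones v \<notin> ?I})"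
    by simp
  also have "\<dots> \<le> 2 ^ k * (2 ^ m / (4 * e^2 * real m))"
    by (rule mult_left_mono[OF card_freq_ones_deviation[OF \<open>0 < m\<close> \<open>0 < e\<close>]]) simp
  also have "\<dots> = 2 ^ N / (4 * e^2 * real (N - k))"
    by (simp add: N power_add)
  finally show ?thesis .
qed

lemma card_R_east_deviation:
  assumes "k < N" "0 < e"
  shows "real (card {u \<in> binwords N. R_east u k \<notin> {1/2 - e .. 1/2 + e}}) \<le> 2 ^ N / (4 * e^2 * real (N - k))"
proof -
  have same: "card {u \<in> binwords N. R_east u k \<notin> {1/2 - e .. 1/2 + e}}
      = card {u \<in> binwords N. R_west u k \<notin> {1/2 - e .. 1/2 + e}}"
    unfolding R_east_eq_R_west_rev
    by (rule card_Collect_bij_betw[OF bij_betw_rev_binwords, where P = "\<lambda>v. R_west v k \<notin> _"])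
  show ?thesis
    using card_R_west_deviation[OF assms] by (simp only: same)
qed

definition unbalanced_words :: "nat \<Rightarrow> real \<Rightarrow> nat \<Rightarrow> nat list set" where
  "unbalanced_words N e k = {u \<in> binwords N.
     R_west u k \<notin> {1/2 - e .. 1/2 + e} \<or> R_east u k \<notin> {1/2 - e .. 1/2 + e}}"

lemma card_unbalanced_words:
  assumes "0 < N" "2 * k \<le> N" "0 < e"
  shows "real (card (unbalanced_words N e k)) \<le> 2 ^ N / (e^2 * real N)"
proof -
  let ?I = "{1/2 - e .. 1/2 + e}"
  let ?W = "{u \<in> binwords N. R_west u k \<notin> ?I}" and ?E = "{u \<in> binwords N. R_east u k \<notin> ?I}"
  have "k < N" using assms by simp
  have "unbalanced_words N e k = ?W \<union> ?E"
    unfolding unbalanced_words_def by blast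
  then have "real (card (unbalanced_words N e k)) \<le> real (card ?W) + real (card ?E)"
    using card_Un_le[of ?W ?E] by (simp only: of_nat_add [symmetric] of_nat_le_iff)
  also have "\<dots> \<le> 2 ^ N / (4 * e^2 * real (N - k)) + 2 ^ N / (4 * e^2 * real (N - k))"
    using card_R_west_deviation[OF \<open>k < N\<close> \<open>0 < e\<close>] card_R_east_deviation[OF \<open>k < N\<close> \<open>0 < e\<close>]
    by (rule add_mono)
  also have "\<dots> = 2 ^ N / (e^2 * (2 * real (N - k)))"
    by (simp add: field_simps)
  also have "\<dots> \<le> 2 ^ N / (e^2 * real N)"
    using assms by (intro divide_left_mono mult_left_mono) (auto simp: of_nat_diff)
  finally show ?thesis .
qed

lemma card_UN_unbalanced_words:
  assumes "0 < N" "2 * K \<le> N" "0 < e"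
  shows "real (card (\<Union>k\<le>K. unbalanced_words N e k)) \<le> real (Suc K) * 2 ^ N / (e^2 * real N)"
proof -
  have "real (card (\<Union>k\<le>K. unbalanced_words N e k)) \<le> (\<Sum>k\<le>K. real (card (unbalanced_words N e k)))"
    using card_UN_le[of "{..K}" "unbalanced_words N e"]
    by (simp only: of_nat_sum [symmetric] of_nat_le_iff finite_atMost)
  also have "\<dots> \<le> (\<Sum>k\<le>K. 2 ^ N / (e^2 * real N))"
    using assms by (intro sum_mono card_unbalanced_words) auto
  finally show ?thesis by simp
qed

lemma card_UN_unbalanced_words_le:
  assumes "0 < e" "e \<le> 1" "2 \<le> e^3 * real N"
  shows "real (card (\<Union>k\<le>nat \<lfloor>e^3 / 2 * real N\<rfloor>. unbalanced_words N e k)) \<le> e * 2 ^ N"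
proof -
  define K where "K = nat \<lfloor>e^3 / 2 * real N\<rfloor>"
  have "0 < N" using assms(3) by (cases N) auto
  have "e^3 * real N \<le> real N"
    using assms by (intro mult_left_le_one_le) (auto simp: power_le_one)
  moreover have "real K \<le> e^3 / 2 * real N"
    unfolding K_def using assms(3) by linarith
  ultimately have "2 * K \<le> N" and K: "real (Suc K) \<le> e^3 * real N"
    using assms(3) by linarith+
  have "real (card (\<Union>k\<le>K. unbalanced_words N e k)) \<le> real (Suc K) * 2 ^ N / (e^2 * real N)"
    using card_UN_unbalanced_words \<open>0 < N\<close> \<open>2 * K \<le> N\<close> assms(1) by blast
  also have "\<dots> \<le> e^3 * real N * 2 ^ N / (e^2 * real N)"
    using K \<open>0 < N\<close> assms(1) by (intro divide_right_mono mult_right_mono) auto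
  also have "\<dots> = e * 2 ^ N"
    using \<open>0 < N\<close> assms(1) by (simp add: power2_eq_square power3_eq_cube)
  finally show ?thesis unfolding K_def .
qed

theorem theorem2p5:
  fixes \<epsilon> :: real
  assumes "0 < \<epsilon>" and "\<epsilon> < 1/2"
  shows "\<exists>\<delta>::real. \<delta> > 0 \<and> (\<exists>N0::nat. \<forall>N\<ge>N0. \<exists>E. E \<subseteq> binwords N \<and>
            real (card E) \<le> \<epsilon> * 2 ^ N \<and>
            (\<forall>u \<in> binwords N - E. \<forall>k::nat. k < N \<and> real k \<le> of_int \<lfloor>\<delta> * real N\<rfloor> \<longrightarrow>
               R_west u k \<in> {1/2 - \<epsilon> .. 1/2 + \<epsilon>} \<and>
               R_east u k \<in> {1/2 - \<epsilon> .. 1/2 + \<epsilon>}))"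
proof (intro exI[of _ "\<epsilon>^3 / 2"] conjI exI[of _ "nat \<lceil>2 / \<epsilon>^3\<rceil>"] allI impI)
  show "\<epsilon>^3 / 2 > 0" using assms by simp
  fix N assume "N \<ge> nat \<lceil>2 / \<epsilon>^3\<rceil>"
  then have "2 \<le> \<epsilon>^3 * real N"
    using assms(1) by (simp add: divide_le_eq mult.commute)
  then have "real (card (\<Union>k\<le>nat \<lfloor>\<epsilon>^3 / 2 * real N\<rfloor>. unbalanced_words N \<epsilon> k)) \<le> \<epsilon> * 2 ^ N"
    using assms by (intro card_UN_unbalanced_words_le) auto
  then show "\<exists>E. E \<subseteq> binwords N \<and> real (card E) \<le> \<epsilon> * 2 ^ N \<and>
      (\<forall>u \<in> binwords N - E. \<forall>k. k < N \<and> real k \<le> of_int \<lfloor>\<epsilon>^3 / 2 * real N\<rfloor> \<longrightarrow>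
         R_west u k \<in> {1/2 - \<epsilon> .. 1/2 + \<epsilon>} \<and> R_east u k \<in> {1/2 - \<epsilon> .. 1/2 + \<epsilon>})"
    by (intro exI[of _ "\<Union>k\<le>nat \<lfloor>\<epsilon>^3 / 2 * real N\<rfloor>. unbalanced_words N \<epsilon> k"] conjI)
      (auto simp: unbalanced_words_def le_nat_iff)
qed

end
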